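(* Suppose the probability measure $pr$ satisfies: for every $B\in\Delta$ and all distinct objects $a,b\in U\setminus\mathrm{inds}_B$, $$pr(F\bar G_b\mid FG_a\wedge B)\le pr(F\bar G_b\mid B).$$ Then for every object $a\in U$ and every $D\in\delta$ that determines neither $FG_a$ nor $H$, Nicod's condition holds: $$pr(H\mid FG_a\wedge D)>pr(H\mid D).$$
   Context: Fix an integer $N\ge 1$, the universe $U=\{1,\dots,N\}$ of distinct objects, and two monadic predicates $F,G$. For an object $b$ write $F_b$ ("$b$ is $F$"), $G_b$, and $F{\to}G_b:=F_b\to G_b$, $F\bar G_b:=F_b\wedge\neg G_b$, $FG_b:=F_b\wedge G_b$, $\bar FG_b:=\neg F_b\wedge G_b$, $\bar F\bar G_b:=\neg F_b\wedge\neg G_b$. For a 1-place predicate $\psi$ and objects $b_1,\dots,b_n$ write $\psi_{b_1:b_n}:=\psi_{b_1}\wedge\dots\wedge\psi_{b_n}$ (the tautology $\top$ if the list is empty). The hypothesis is $H:=\bigwedge_{b\in U}(F_b\to G_b)$. The sample space $\Omega$ is the set of complete description vectors, i.e. all truth assignments to the atoms $F_b,G_b$ ($b\in U$); a proposition $\rho$ is identified with the event $\{o\in\Omega:o\models\rho\}$, $pr$ is a probability measure on the power set of $\Omega$, and $pr(\rho)$ denotes the probability of that event. Standing assumption (Cournot's principle): $0<pr(\rho)<1$ for every proposition $\rho$ that is neither valid nor unsatisfiable. A proposition $D$ determines $\rho$ if $D\models\rho$ or $D\models\neg\rho$. $\Delta$ is the set of consistent propositions logically equivalent to a conjunction $\bigwedge_{x=1}^{k}\psi^x_{b_x}$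 ($k\ge 0$) with $b_1,\dots,b_k\in U$ pairwise distinct and each $\psi^x$ one of the predicates $F,\neg F,G,\neg G,\bar F\bar G,\neg\bar F\bar G,\bar FG,\neg\bar FG,F\bar G,F{\to}G,FG,\neg FG$; for such $\rho$, $\mathrm{inds}_\rho:=\{b_1,\dots,b_k\}$ (so $\top\in\Delta$ with $\mathrm{inds}_\top=\emptyset$). $\delta\subseteq\Delta$ is the set of such conjunctions in which every $\psi^x\in\{\bar F\bar G,\bar FG,FG\}$ (complete descriptions of some objects, none of them a counterexample to $H$). *)

theory Defs
  imports "HOL-Probability.Probability"
begin

text \<open>A complete description vector assigns to every object b in U = {1..N} the pair
  (truth value of F_b, truth value of G_b). Outside U the assignment is fixed to (False,False),
  so that Omega N is in bijection with the truth assignments to the atoms F_b, G_b (b in U).\<close>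

type_synonym cdv = "nat \<Rightarrow> bool \<times> bool"

definition U :: "nat \<Rightarrow> nat set" where
  "U N = {1..N}"

definition Omega :: "nat \<Rightarrow> cdv set" where
  "Omega N = {w. \<forall>b. b \<notin> U N \<longrightarrow> w b = (False, False)}"

definition pF :: "(bool \<times> bool) set" where "pF = {p. fst p}"
definition pnotF :: "(bool \<times> bool) set" where "pnotF = {p. \<not> fst p}"
definition pG :: "(bool \<times> bool) set" where "pG = {p. snd p}"
definition pnotG :: "(bool \<times> bool) set" where "pnotG = {p. \<not> snd p}"
definition pnFnG :: "(bool \<times> bool) set" where "pnFnG = {p. \<not> fst p \<and> \<not> snd p}"
definition pnot_nFnG :: "(bool \<times> bool) set" where "pnot_nFnG = - pnFnG"
definition pnFG :: "(bool \<times> bool) set" where "pnFG = {p. \<not> fst p \<and> snd p}"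
definition pnot_nFG :: "(bool \<times> bool) set" where "pnot_nFG = - pnFG"
definition pFnG :: "(bool \<times> bool) set" where "pFnG = {p. fst p \<and> \<not> snd p}"
definition pFimpG :: "(bool \<times> bool) set" where "pFimpG = {p. fst p \<longrightarrow> snd p}"
definition pFG :: "(bool \<times> bool) set" where "pFG = {p. fst p \<and> snd p}"
definition pnot_FG :: "(bool \<times> bool) set" where "pnot_FG = - pFG"

definition Delta_preds :: "(bool \<times> bool) set set" where
  "Delta_preds = {pF, pnotF, pG, pnotG, pnFnG, pnot_nFnG, pnFG, pnot_nFG, pFnG, pFimpG, pFG, pnot_FG}"

definition delta_preds :: "(bool \<times> bool) set set" where
  "delta_preds = {pnFnG, pnFG, pFG}"

definition atom :: "nat \<Rightarrow> nat \<Rightarrow> (bool \<times> bool) set \<Rightarrow> cdv set" where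
  "atom N b P = {w \<in> Omega N. w b \<in> P}"

text \<open>Event of a conjunction psi^1_{b_1} /\ ... /\ psi^k_{b_k} with pairwise distinct objects,
  represented by a finite partial map c from objects to predicates (dom c = inds).\<close>
definition conj_event :: "nat \<Rightarrow> (nat \<rightharpoonup> (bool \<times> bool) set) \<Rightarrow> cdv set" where
  "conj_event N c = {w \<in> Omega N. \<forall>b \<in> dom c. w b \<in> the (c b)}"

definition Delta_rep :: "nat \<Rightarrow> (nat \<rightharpoonup> (bool \<times> bool) set) set" where
  "Delta_rep N = {c. dom c \<subseteq> U N \<and> ran c \<subseteq> Delta_preds \<and> conj_event N c \<noteq> {}}"

definition delta_rep :: "nat \<Rightarrow> (nat \<rightharpoonup> (bool \<times> bool) set) set" where
  "delta_rep N = {c. dom c \<subseteq> U N \<and> ran c \<subseteq> delta_preds \<and> conj_event N c \<noteq> {}}"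

definition Hyp :: "nat \<Rightarrow> cdv set" where
  "Hyp N = {w \<in> Omega N. \<forall>b \<in> U N. fst (w b) \<longrightarrow> snd (w b)}"

definition determines :: "nat \<Rightarrow> cdv set \<Rightarrow> cdv set \<Rightarrow> bool" where
  "determines N D \<rho> \<longleftrightarrow> D \<subseteq> \<rho> \<or> D \<subseteq> Omega N - \<rho>"

definition cond_pr :: "cdv measure \<Rightarrow> cdv set \<Rightarrow> cdv set \<Rightarrow> real" where
  "cond_pr M A B = measure M (A \<inter> B) / measure M B"

end

theory Submission
  imports Defs
begin

text \<open>Write \<open>T\<^sub>S\<close> for the conjunction of \<open>F\<rightarrow>G\<^sub>b\<close> over \<open>b \<in> S\<close>. Adding the conjuncts of
  \<open>T\<^sub>S\<close> one at a time and using the chain rule, the hypothesis (in the equivalent form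
  \<open>pr(F\<rightarrow>G\<^sub>b | FG\<^sub>a \<and> B) \<ge> pr(F\<rightarrow>G\<^sub>b | B)\<close>, with \<open>B\<close> the conjunction built so far) shows
  \<open>pr(T\<^sub>S | FG\<^sub>a \<and> D) \<ge> pr(T\<^sub>S | D)\<close>. For \<open>D \<in> \<delta>\<close> not mentioning \<open>a\<close> and
  \<open>S = U - inds\<^sub>D - {a}\<close>, \<open>H\<close> is equivalent to \<open>T\<^sub>S\<close> given \<open>FG\<^sub>a \<and> D\<close> and to \<open>T\<^sub>S \<and> F\<rightarrow>G\<^sub>a\<close>
  given \<open>D\<close>; the last conjunct strictly lowers the probability by Cournot's principle.\<close>

definition Hyp_on :: "nat \<Rightarrow> nat set \<Rightarrow> cdv set" where
  "Hyp_on N S = {w \<in> Omega N. \<forall>b \<in> S. w b \<in> pFimpG}"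

lemma Hyp_eq_Hyp_on: "Hyp N = Hyp_on N (U N)"
  by (auto simp: Hyp_def Hyp_on_def pFimpG_def)

lemma Hyp_on_insert: "Hyp_on N (insert b S) = Hyp_on N S \<inter> atom N b pFimpG"
  by (auto simp: Hyp_on_def atom_def)

lemma Hyp_on_Un: "Hyp_on N (S \<union> S') = Hyp_on N S \<inter> Hyp_on N S'"
  by (auto simp: Hyp_on_def)

lemma Hyp_on_antimono: "S \<subseteq> S' \<Longrightarrow> Hyp_on N S' \<subseteq> Hyp_on N S"
  by (auto simp: Hyp_on_def)

lemma atom_subset_Omega: "atom N b P \<subseteq> Omega N"
  by (auto simp: atom_def)

lemma conj_event_subset_Omega: "conj_event N c \<subseteq> Omega N"
  by (auto simp: conj_event_def)

lemma atom_FimpG_eq_compl: "atom N b pFimpG = Omega N - atom N b pFnG"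
  by (auto simp: atom_def pFimpG_def pFnG_def)

lemma conj_event_map_upd:
  "b \<notin> dom c \<Longrightarrow> conj_event N (c(b \<mapsto> P)) = conj_event N c \<inter> atom N b P"
  by (auto simp: conj_event_def atom_def)

lemma override_on_in_conj_event:
  assumes "w \<in> conj_event N c" and "V \<subseteq> U N - dom c"
  shows "override_on w f V \<in> conj_event N c"
  using assms by (auto simp: conj_event_def Omega_def override_on_def)

lemma FG_Int_conj_event_nonempty:
  assumes "conj_event N c \<noteq> {}" and "a \<in> U N" and "a \<notin> dom c"
  shows "atom N a pFG \<inter> conj_event N c \<noteq> {}"
proof -
  obtain w where w: "w \<in> conj_event N c" using assms(1) by blast
  have "override_on w (\<lambda>_. (True, True)) {a} \<in> conj_event N c"
    using override_on_in_conj_event[OF w] assms(2,3) by blast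
  then have "override_on w (\<lambda>_. (True, True)) {a} \<in> atom N a pFG \<inter> conj_event N c"
    using conj_event_subset_Omega by (fastforce simp: atom_def pFG_def)
  then show ?thesis by blast
qed

lemma map_upd_FimpG_in_Delta_rep:
  assumes "c \<in> Delta_rep N" and "b \<in> U N" and "b \<notin> dom c"
  shows "c(b \<mapsto> pFimpG) \<in> Delta_rep N"
proof -
  have "atom N b pFG \<inter> conj_event N c \<noteq> {}"
    using FG_Int_conj_event_nonempty assms by (auto simp: Delta_rep_def)
  then have "conj_event N (c(b \<mapsto> pFimpG)) \<noteq> {}"
    using assms(3) by (auto simp: conj_event_map_upd atom_def pFG_def pFimpG_def)
  moreover have "ran (c(b \<mapsto> pFimpG)) \<subseteq> Delta_preds"
    using assms(1,3) by (auto simp: Delta_rep_def ran_map_upd domIff) (simp add: Delta_preds_def)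
  ultimately show ?thesis
    using assms by (auto simp: Delta_rep_def)
qed

lemma delta_rep_subset_Delta_rep: "delta_rep N \<subseteq> Delta_rep N"
proof -
  have "delta_preds \<subseteq> Delta_preds"
    unfolding delta_preds_def Delta_preds_def by simp
  then show ?thesis
    unfolding delta_rep_def Delta_rep_def by blast
qed

lemma delta_pred_cases:
  assumes "c \<in> delta_rep N" and "c b = Some P"
  obtains "P = pnFnG" | "P = pnFG" | "P = pFG"
  using assms by (auto simp: delta_rep_def delta_preds_def ran_def)

lemma delta_conj_event_subset_Hyp_on:
  assumes "c \<in> delta_rep N"
  shows "conj_event N c \<subseteq> Hyp_on N (dom c)"
proof
  fix w assume w: "w \<in> conj_event N c"
  have "w b \<in> pFimpG" if "c b = Some P" for b P
    using w that by (cases rule: delta_pred_cases[OF assms that])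
      (force simp: conj_event_def pnFnG_def pnFG_def pFG_def pFimpG_def)+
  then show "w \<in> Hyp_on N (dom c)"
    using w by (auto simp: Hyp_on_def conj_event_def)
qed

lemma delta_conj_event_determines_FG:
  assumes "c \<in> delta_rep N" and "a \<in> dom c"
  shows "determines N (conj_event N c) (atom N a pFG)"
proof -
  obtain P where P: "c a = Some P" using assms(2) by blast
  then have "\<forall>w \<in> conj_event N c. w a \<in> P" by (force simp: conj_event_def)
  then show ?thesis using conj_event_subset_Omega[of N c]
    by (cases rule: delta_pred_cases[OF assms(1) P])
      (auto simp: determines_def atom_def pnFnG_def pnFG_def pFG_def)
qed

lemma cond_pr_Int:
  assumes "measure M (B \<inter> C) \<noteq> 0"
  shows "cond_pr M (A \<inter> B) C = cond_pr M A (B \<inter> C) * cond_pr M B C"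
  using assms by (simp add: cond_pr_def Int_assoc)

locale cournot_space =
  fixes N :: nat and M :: "cdv measure"
  assumes prob: "prob_space M"
    and space: "space M = Omega N"
    and sets: "sets M = Pow (Omega N)"
    and cournot: "\<forall>E. E \<subseteq> Omega N \<and> E \<noteq> {} \<and> E \<noteq> Omega N \<longrightarrow>
                     0 < measure M E \<and> measure M E < 1"
begin

sublocale prob_space M by (rule prob)

lemma measure_pos: "E \<subseteq> Omega N \<Longrightarrow> E \<noteq> {} \<Longrightarrow> 0 < measure M E"
  using cournot space prob_space by (cases "E = Omega N") auto

lemma cond_pr_Omega:
  assumes "C \<subseteq> Omega N" and "C \<noteq> {}"
  shows "cond_pr M (Omega N) C = 1"
proof -
  have "Omega N \<inter> C = C" using assms(1) by blast
  then show ?thesis using measure_pos[OF assms] by (simp add: cond_pr_def)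
qed

lemma cond_pr_compl:
  assumes "A \<subseteq> Omega N" and "B \<subseteq> Omega N" and "B \<noteq> {}"
  shows "cond_pr M (Omega N - A) B = 1 - cond_pr M A B"
proof -
  have "(Omega N - A) \<inter> B = B - A" using assms(2) by blast
  then have "measure M ((Omega N - A) \<inter> B) = measure M B - measure M (B \<inter> A)"
    using assms(1,2) sets by (simp add: finite_measure_Diff')
  then show ?thesis
    using measure_pos[OF assms(2,3)] by (simp add: cond_pr_def Int_commute field_simps)
qed

lemma cond_pr_strict_mono:
  assumes "A \<subseteq> B" and "B \<subseteq> Omega N" and "C \<subseteq> Omega N" and "(B - A) \<inter> C \<noteq> {}"
  shows "cond_pr M A C < cond_pr M B C"
proof -
  have "B \<inter> C = A \<inter> C \<union> (B - A) \<inter> C" and "A \<inter> C \<inter> ((B - A) \<inter> C) = {}"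
    using assms(1) by blast+
  moreover have "A \<inter> C \<in> sets M" "(B - A) \<inter> C \<in> sets M"
    using assms(1,2) sets by auto
  ultimately have "measure M (B \<inter> C) = measure M (A \<inter> C) + measure M ((B - A) \<inter> C)"
    by (simp add: finite_measure_Union)
  moreover have "0 < measure M ((B - A) \<inter> C)" and "0 < measure M C"
    using assms(2-4) by (auto intro!: measure_pos)
  ultimately show ?thesis by (simp add: cond_pr_def divide_strict_right_mono)
qed

end

locale nicod_space = cournot_space +
  assumes FG_lowers_counterexample:
    "\<forall>c \<in> Delta_rep N. \<forall>a b. a \<in> U N - dom c \<and> b \<in> U N - dom c \<and> a \<noteq> b \<longrightarrow>
       cond_pr M (atom N b pFnG) (atom N a pFG \<inter> conj_event N c)
         \<le> cond_pr M (atom N b pFnG) (conj_event N c)"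
begin

lemma FG_raises_FimpG:
  assumes "c \<in> Delta_rep N" and "a \<in> U N - dom c" and "b \<in> U N - dom c" and "a \<noteq> b"
  shows "cond_pr M (atom N b pFimpG) (conj_event N c)
           \<le> cond_pr M (atom N b pFimpG) (atom N a pFG \<inter> conj_event N c)"
proof -
  have "conj_event N c \<noteq> {}" and "atom N a pFG \<inter> conj_event N c \<noteq> {}"
    using assms FG_Int_conj_event_nonempty by (auto simp: Delta_rep_def)
  then show ?thesis
    using FG_lowers_counterexample assms
    by (simp add: atom_FimpG_eq_compl cond_pr_compl atom_subset_Omega conj_event_subset_Omega
        le_infI2)
qed

lemma FG_raises_Hyp_on:
  assumes "finite S" and "c \<in> Delta_rep N" and "a \<in> U N - dom c" and "S \<subseteq> U N - dom c - {a}"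
  shows "cond_pr M (Hyp_on N S) (conj_event N c)
           \<le> cond_pr M (Hyp_on N S) (atom N a pFG \<inter> conj_event N c)"
  using assms
proof (induction S arbitrary: c rule: finite_induct)
  case empty
  have "conj_event N c \<noteq> {}" and "atom N a pFG \<inter> conj_event N c \<noteq> {}"
    using empty FG_Int_conj_event_nonempty by (auto simp: Delta_rep_def)
  then show ?case
    using atom_subset_Omega conj_event_subset_Omega
    by (simp add: Hyp_on_def cond_pr_Omega le_infI1)
next
  case (insert b S)
  define c' where "c' = c(b \<mapsto> pFimpG)"
  let ?X = "atom N a pFG"
  have b: "b \<in> U N - dom c" "a \<noteq> b" using insert.prems by auto
  have c': "c' \<in> Delta_rep N" "a \<in> U N - dom c'" "S \<subseteq> U N - dom c' - {a}"
    using insert map_upd_FimpG_in_Delta_rep[OF insert.prems(1)] b by (auto simp: c'_def)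
  have C': "atom N b pFimpG \<inter> conj_event N c = conj_event N c'"
    using b by (auto simp: c'_def conj_event_map_upd)
  have "conj_event N c' \<noteq> {}" and "?X \<inter> conj_event N c' \<noteq> {}"
    using c' FG_Int_conj_event_nonempty by (auto simp: Delta_rep_def)
  then have pos: "measure M (conj_event N c') \<noteq> 0" "measure M (?X \<inter> conj_event N c') \<noteq> 0"
    using measure_pos atom_subset_Omega conj_event_subset_Omega by (metis le_infI1 less_irrefl)+
  have "cond_pr M (Hyp_on N (insert b S)) (conj_event N c)
      = cond_pr M (Hyp_on N S) (conj_event N c') * cond_pr M (atom N b pFimpG) (conj_event N c)"
    using pos C' by (simp add: Hyp_on_insert cond_pr_Int)
  also have "\<dots> \<le> cond_pr M (Hyp_on N S) (?X \<inter> conj_event N c')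
                   * cond_pr M (atom N b pFimpG) (?X \<inter> conj_event N c)"
    using insert.IH[OF c'] FG_raises_FimpG[OF insert.prems(1,2) b]
    by (intro mult_mono) (simp_all add: cond_pr_def)
  also have "\<dots> = cond_pr M (Hyp_on N (insert b S)) (?X \<inter> conj_event N c)"
    using pos C' by (simp add: Hyp_on_insert cond_pr_Int Int_left_commute)
  finally show ?case .
qed

lemma nicod_condition:
  assumes "a \<in> U N" and "c \<in> delta_rep N"
    and "\<not> determines N (conj_event N c) (atom N a pFG)"
  shows "cond_pr M (Hyp N) (conj_event N c) < cond_pr M (Hyp N) (atom N a pFG \<inter> conj_event N c)"
proof -
  let ?D = "conj_event N c"
  define S where "S = U N - dom c - {a}"
  have a: "a \<in> U N - dom c"
    using assms delta_conj_event_determines_FG by blast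
  have U_split: "U N = dom c \<union> S \<union> {a}"
    using a assms(2) by (auto simp: S_def delta_rep_def)
  have D_Hyp: "?D \<subseteq> Hyp_on N (dom c)"
    using assms(2) by (rule delta_conj_event_subset_Hyp_on)
  obtain w where w: "w \<in> ?D" using assms(2) by (auto simp: delta_rep_def)
  define w' where "w' = override_on w (\<lambda>b. if b = a then (True, False) else (True, True)) (insert a S)"
  have "w' \<in> ?D"
    unfolding w'_def using a by (intro override_on_in_conj_event[OF w]) (auto simp: S_def)
  moreover have "w' \<in> Hyp_on N S"
    using \<open>w' \<in> ?D\<close> conj_event_subset_Omega by (auto simp: w'_def S_def Hyp_on_def pFimpG_def)
  moreover have "w' \<notin> Hyp N"
  proof -
    have "w' a = (True, False)" by (simp add: w'_def)
    then show ?thesis using a by (auto simp: Hyp_def intro!: bexI[of _ a])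
  qed
  ultimately have "(Hyp_on N S - Hyp N) \<inter> ?D \<noteq> {}" by blast
  moreover have "Hyp N \<subseteq> Hyp_on N S"
    unfolding Hyp_eq_Hyp_on by (rule Hyp_on_antimono) (auto simp: S_def)
  ultimately have "cond_pr M (Hyp N) ?D < cond_pr M (Hyp_on N S) ?D"
    by (intro cond_pr_strict_mono) (auto simp: Hyp_on_def conj_event_subset_Omega)
  also have "\<dots> \<le> cond_pr M (Hyp_on N S) (atom N a pFG \<inter> ?D)"
    using FG_raises_Hyp_on[of S c a] delta_rep_subset_Delta_rep assms(2) a
    by (auto simp: S_def U_def)
  also have "Hyp_on N S \<inter> (atom N a pFG \<inter> ?D) = Hyp N \<inter> (atom N a pFG \<inter> ?D)"
    using D_Hyp unfolding Hyp_eq_Hyp_on U_split Hyp_on_Un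
    by (auto simp: Hyp_on_def atom_def pFG_def pFimpG_def)
  then have "cond_pr M (Hyp_on N S) (atom N a pFG \<inter> ?D) = cond_pr M (Hyp N) (atom N a pFG \<inter> ?D)"
    by (simp add: cond_pr_def)
  finally show ?thesis .
qed

end

theorem theorem1:
  fixes N :: nat and M :: "cdv measure"
  assumes N_pos: "N \<ge> 1"
    and prob: "prob_space M"
    and space: "space M = Omega N"
    and sets: "sets M = Pow (Omega N)"
    and cournot: "\<forall>E. E \<subseteq> Omega N \<and> E \<noteq> {} \<and> E \<noteq> Omega N \<longrightarrow>
                     0 < measure M E \<and> measure M E < 1"
    and hyp: "\<forall>c \<in> Delta_rep N. \<forall>a b. a \<in> U N - dom c \<and> b \<in> U N - dom c \<and> a \<noteq> b \<longrightarrow>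
                cond_pr M (atom N b pFnG) (atom N a pFG \<inter> conj_event N c)
                  \<le> cond_pr M (atom N b pFnG) (conj_event N c)"
  shows "\<forall>a \<in> U N. \<forall>c \<in> delta_rep N.
           \<not> determines N (conj_event N c) (atom N a pFG) \<and> \<not> determines N (conj_event N c) (Hyp N) \<longrightarrow>
           cond_pr M (Hyp N) (atom N a pFG \<inter> conj_event N c) > cond_pr M (Hyp N) (conj_event N c)"
proof -
  interpret nicod_space N M
    by (intro nicod_space.intro cournot_space.intro nicod_space_axioms.intro) fact+
  show ?thesis using nicod_condition by blast
qed

end
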